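(* Let $f:\mathbb{R}^n\to\mathbb{R}$ be convex, with the constants $L_j$ as in the context. Then for any $j\in\{1,\dots,n\}$ and all $x',x''\in\mathcal F$, \[ f(x'')\le f(x')+\nabla f(x')^T(x''-x')+\frac{L_j}{2}\|x'-x''\|_{\langle j\rangle}^2. \]
   Context: $n\ge2$; $\mathcal F=\{x\in\mathbb{R}^n: e^Tx=b,\ l_i\le x_i\le u_i\}$ with $e$ the all-ones vector, $b\in\mathbb{R}$, $l_i\in\mathbb{R}\cup\{-\infty\}$, $u_i\in\mathbb{R}\cup\{+\infty\}$, $l_i<u_i$. $f$ is continuously differentiable with Lipschitz continuous gradient on $\mathbb{R}^n$. For $i\ne j$, $L_{i,j}>0$ are constants such that for every $x\in\mathbb{R}^n$ and $s,t\in\mathbb{R}$, $|\nabla f(x+s(e_i-e_j))^T(e_i-e_j)-\nabla f(x+t(e_i-e_j))^T(e_i-e_j)|\le L_{i,j}|s-t|$ ($e_i$ the $i$th unit vector); $L_{i,i}=0$; $L_j=\sum_{i=1}^nL_{i,j}$. $\|x\|_{\langle j\rangle}=\sqrt{\sum_{i\ne j}x_i^2}$. *)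

theory Defs
  imports "HOL-Analysis.Analysis" "HOL-Library.Extended_Real"
begin

definition feasible :: "real \<Rightarrow> ('n::finite \<Rightarrow> ereal) \<Rightarrow> ('n \<Rightarrow> ereal) \<Rightarrow> (real^'n) set" where
  "feasible b l u = {x. (\<Sum>i\<in>UNIV. x $ i) = b \<and> (\<forall>i. l i \<le> ereal (x $ i) \<and> ereal (x $ i) \<le> u i)}"

definition norm_excl :: "'n::finite \<Rightarrow> real^'n \<Rightarrow> real" where
  "norm_excl j x = sqrt (\<Sum>i\<in>UNIV - {j}. (x $ i)^2)"

end

theory Submission
  imports Defs
begin

text \<open>Since the coordinates of \<open>d = x'' - x'\<close> sum to zero, \<open>d\<close> is the combination
  \<open>\<Sum>\<^sub>i\<^sub>\<noteq>\<^sub>j d\<^sub>i (e\<^sub>i - e\<^sub>j)\<close>. Along each direction \<open>e\<^sub>i - e\<^sub>j\<close> the one-dimensional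
  descent lemma holds with constant \<open>L\<^sub>i\<^sub>j\<close>. Writing \<open>x''\<close> as the convex combination with
  weights \<open>L\<^sub>i\<^sub>j / L\<^sub>j\<close> of the points \<open>x' + (d\<^sub>i L\<^sub>j / L\<^sub>i\<^sub>j) (e\<^sub>i - e\<^sub>j)\<close> and applying
  Jensen's inequality, the quadratic terms add up to \<open>L\<^sub>j/2 \<Sum>\<^sub>i\<^sub>\<noteq>\<^sub>j d\<^sub>i\<^sup>2\<close>.\<close>

lemma descent_lemma_real:
  fixes \<phi> \<phi>' :: "real \<Rightarrow> real"
  assumes deriv: "\<And>t. (\<phi> has_real_derivative \<phi>' t) (at t)"
    and lip: "\<And>t. \<bar>\<phi>' t - \<phi>' 0\<bar> \<le> L * \<bar>t\<bar>"
  shows "\<phi> \<tau> \<le> \<phi> 0 + \<tau> * \<phi>' 0 + L / 2 * \<tau>\<^sup>2"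
proof -
  define h where "h = (\<lambda>t. \<phi> t - t * \<phi>' 0 - L / 2 * t\<^sup>2)"
  have h_deriv: "(h has_real_derivative \<phi>' t - \<phi>' 0 - L * t) (at t)" for t
    unfolding h_def by (auto intro!: derivative_eq_intros deriv simp: power2_eq_square)
  have "h \<tau> \<le> h 0"
  proof (cases "\<tau> \<ge> 0")
    case True
    show ?thesis
    proof (rule DERIV_nonpos_imp_nonincreasing[of 0 \<tau> h, OF True])
      fix t :: real assume "0 \<le> t" "t \<le> \<tau>"
      with lip[of t] have "\<phi>' t - \<phi>' 0 - L * t \<le> 0" by simp
      with h_deriv show "\<exists>y. (h has_real_derivative y) (at t) \<and> y \<le> 0" by blast
    qed
  next
    case False
    show ?thesis
    proof (rule DERIV_nonneg_imp_nondecreasing[of \<tau> 0 h])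
      show "\<tau> \<le> 0" using False by simp
    next
      fix t :: real assume "\<tau> \<le> t" "t \<le> 0"
      with lip[of t] have "\<phi>' t - \<phi>' 0 - L * t \<ge> 0" by simp
      with h_deriv show "\<exists>y. (h has_real_derivative y) (at t) \<and> y \<ge> 0" by blast
    qed
  qed
  then show ?thesis
    unfolding h_def by simp
qed

lemma descent_lemma_along_line:
  fixes f :: "'a::real_inner \<Rightarrow> real"
  assumes grad: "\<And>x. (f has_derivative (\<lambda>h. g x \<bullet> h)) (at x)"
    and lip: "\<And>t. \<bar>g (x + t *\<^sub>R v) \<bullet> v - g x \<bullet> v\<bar> \<le> L * \<bar>t\<bar>"
  shows "f (x + \<tau> *\<^sub>R v) \<le> f x + \<tau> * (g x \<bullet> v) + L / 2 * \<tau>\<^sup>2"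
proof -
  have "((\<lambda>t. f (x + t *\<^sub>R v)) has_real_derivative g (x + t *\<^sub>R v) \<bullet> v) (at t)" for t
  proof -
    have "((\<lambda>t. x + t *\<^sub>R v) has_derivative (\<lambda>k. k *\<^sub>R v)) (at t)"
      by (auto intro!: derivative_eq_intros)
    from has_derivative_compose[OF this grad] show ?thesis
      by (simp add: has_field_derivative_def o_def mult_commute_abs)
  qed
  from descent_lemma_real[OF this, of L \<tau>] lip show ?thesis
    by simp
qed

lemma convex_upper_bound_from_line_bounds:
  fixes f :: "'a::real_inner \<Rightarrow> real" and w :: "'i \<Rightarrow> 'a"
  assumes cvx: "convex_on UNIV f" and S: "finite S" "S \<noteq> {}"
    and c_pos: "\<And>i. i \<in> S \<Longrightarrow> c i > 0"
    and line: "\<And>i t. i \<in> S \<Longrightarrow> f (x + t *\<^sub>R w i) \<le> f x + t * (p \<bullet> w i) + c i / 2 * t\<^sup>2"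
  shows "f (x + (\<Sum>i\<in>S. a i *\<^sub>R w i))
    \<le> f x + p \<bullet> (\<Sum>i\<in>S. a i *\<^sub>R w i) + (\<Sum>i\<in>S. c i) / 2 * (\<Sum>i\<in>S. (a i)\<^sup>2)"
proof -
  define C where "C = (\<Sum>i\<in>S. c i)"
  have "C > 0"
    unfolding C_def using S c_pos by (simp add: sum_pos)
  text \<open>Convex weights \<open>\<mu> i\<close> and step lengths \<open>\<tau> i\<close> with \<open>\<mu> i * \<tau> i = a i\<close>, chosen so
    that every quadratic term \<open>\<mu> i * c i / 2 * (\<tau> i)\<^sup>2\<close> becomes \<open>C / 2 * (a i)\<^sup>2\<close>.\<close>
  define \<mu> where "\<mu> i = c i / C" for i
  define \<tau> where "\<tau> i = a i * C / c i" for i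
  have \<mu>_sum: "(\<Sum>i\<in>S. \<mu> i) = 1"
    unfolding \<mu>_def using \<open>C > 0\<close> by (simp add: sum_divide_distrib[symmetric] C_def)
  have \<mu>_nonneg: "\<mu> i \<ge> 0" if "i \<in> S" for i
    using c_pos[OF that] \<open>C > 0\<close> by (simp add: \<mu>_def)
  have \<mu>_\<tau>: "\<mu> i * \<tau> i = a i" if "i \<in> S" for i
    using c_pos[OF that] \<open>C > 0\<close> by (simp add: \<mu>_def \<tau>_def)
  have "x + (\<Sum>i\<in>S. a i *\<^sub>R w i) = (\<Sum>i\<in>S. \<mu> i *\<^sub>R (x + \<tau> i *\<^sub>R w i))"
    using \<mu>_\<tau> by (simp add: scaleR_add_right sum.distrib scaleR_sum_left[symmetric] \<mu>_sum)
  then have "f (x + (\<Sum>i\<in>S. a i *\<^sub>R w i)) \<le> (\<Sum>i\<in>S. \<mu> i * f (x + \<tau> i *\<^sub>R w i))"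
    using convex_on_sum[OF S cvx \<mu>_sum \<mu>_nonneg] by simp
  also have "\<dots> \<le> (\<Sum>i\<in>S. \<mu> i * (f x + \<tau> i * (p \<bullet> w i) + c i / 2 * (\<tau> i)\<^sup>2))"
    by (intro sum_mono mult_left_mono line \<mu>_nonneg)
  also have "\<dots> = (\<Sum>i\<in>S. \<mu> i * f x + a i * (p \<bullet> w i) + C / 2 * (a i)\<^sup>2)"
  proof (rule sum.cong[OF refl])
    fix i assume "i \<in> S"
    have "\<mu> i * (c i / 2 * (\<tau> i)\<^sup>2) = C / 2 * (a i)\<^sup>2"
      using c_pos[OF \<open>i \<in> S\<close>] \<open>C > 0\<close> by (simp add: \<mu>_def \<tau>_def field_simps power2_eq_square)
    with \<mu>_\<tau>[OF \<open>i \<in> S\<close>] show "\<mu> i * (f x + \<tau> i * (p \<bullet> w i) + c i / 2 * (\<tau> i)\<^sup>2)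
        = \<mu> i * f x + a i * (p \<bullet> w i) + C / 2 * (a i)\<^sup>2"
      by (simp add: algebra_simps)
  qed
  also have "\<dots> = f x + p \<bullet> (\<Sum>i\<in>S. a i *\<^sub>R w i) + C / 2 * (\<Sum>i\<in>S. (a i)\<^sup>2)"
    by (simp add: sum.distrib inner_sum_right sum_distrib_left
        sum_distrib_right[symmetric] \<mu>_sum)
  finally show ?thesis
    unfolding C_def .
qed

lemma zero_sum_vector_eq_sum_axis_diff:
  fixes d :: "real^'n"
  assumes "(\<Sum>i\<in>UNIV. d $ i) = 0"
  shows "(\<Sum>i\<in>UNIV - {j}. d $ i *\<^sub>R (axis i 1 - axis j 1)) = d"
proof -
  have "(\<Sum>i\<in>UNIV - {j}. d $ i *\<^sub>R (axis i 1 - axis j 1))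
      = (\<Sum>i\<in>UNIV. d $ i *\<^sub>R (axis i 1 - axis j 1))"
    by (simp add: sum.remove[of UNIV j])
  also have "\<dots> = (\<Sum>i\<in>UNIV. d $ i *s axis i 1) - (\<Sum>i\<in>UNIV. d $ i) *\<^sub>R axis j 1"
    by (simp add: scalar_mult_eq_scaleR scaleR_diff_right sum_subtractf scaleR_sum_left)
  also have "\<dots> = d"
    using assms by (simp add: basis_expansion)
  finally show ?thesis .
qed

theorem lemma4:
  fixes f :: "real^'n \<Rightarrow> real" and g :: "real^'n \<Rightarrow> real^'n"
    and b :: real and l u :: "'n \<Rightarrow> ereal"
    and L :: "'n \<Rightarrow> 'n \<Rightarrow> real" and j :: 'n and x' x'' :: "real^'n"
  assumes n2: "CARD('n) \<ge> 2"
    and lu: "\<And>i. l i \<noteq> \<infinity> \<and> u i \<noteq> -\<infinity> \<and> l i < u i"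
    and grad: "\<And>x. (f has_derivative (\<lambda>h. g x \<bullet> h)) (at x)"
    and lip: "\<exists>K. \<forall>x y. norm (g x - g y) \<le> K * norm (x - y)"
    and Lpos: "\<And>i k. i \<noteq> k \<Longrightarrow> L i k > 0"
    and Ldiag: "\<And>i. L i i = 0"
    and Lbound: "\<And>i k x s t. i \<noteq> k \<Longrightarrow>
        \<bar>g (x + s *\<^sub>R (axis i 1 - axis k 1)) \<bullet> (axis i 1 - axis k 1)
         - g (x + t *\<^sub>R (axis i 1 - axis k 1)) \<bullet> (axis i 1 - axis k 1)\<bar> \<le> L i k * \<bar>s - t\<bar>"
    and cvx: "convex_on UNIV f"
    and x1: "x' \<in> feasible b l u" and x2: "x'' \<in> feasible b l u"
  shows "f x'' \<le> f x' + g x' \<bullet> (x'' - x') + (\<Sum>i\<in>UNIV. L i j) / 2 * (norm_excl j (x' - x''))^2"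
proof -
  define S where "S = UNIV - {j}"
  define w :: "'n \<Rightarrow> real^'n" where "w i = axis i 1 - axis j 1" for i
  define d where "d = x'' - x'"
  have d_sum: "(\<Sum>i\<in>UNIV. d $ i) = 0"
    using x1 x2 by (simp add: feasible_def d_def sum_subtractf)
  have d_decomp: "x'' - x' = (\<Sum>i\<in>S. d $ i *\<^sub>R w i)"
    unfolding S_def w_def zero_sum_vector_eq_sum_axis_diff[OF d_sum] by (simp add: d_def)
  have "S \<noteq> {}"
    using n2 card_mono[of "{j}" UNIV] by (auto simp: S_def)
  moreover have "f (x' + t *\<^sub>R w i) \<le> f x' + t * (g x' \<bullet> w i) + L i j / 2 * t\<^sup>2"
    if "i \<in> S" for i t
    using Lbound[of i j x' _ 0] that
    by (intro descent_lemma_along_line[OF grad]) (simp add: S_def w_def)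
  ultimately have "f (x' + (x'' - x'))
      \<le> f x' + g x' \<bullet> (x'' - x') + (\<Sum>i\<in>S. L i j) / 2 * (\<Sum>i\<in>S. (d $ i)\<^sup>2)"
    unfolding d_decomp using Lpos
    by (intro convex_upper_bound_from_line_bounds[OF cvx]) (auto simp: S_def)
  moreover have "(\<Sum>i\<in>S. L i j) = (\<Sum>i\<in>UNIV. L i j)"
    using Ldiag[of j] by (simp add: S_def sum.remove[of UNIV j])
  moreover have "(\<Sum>i\<in>S. (d $ i)\<^sup>2) = (norm_excl j (x' - x''))\<^sup>2"
    by (simp add: norm_excl_def S_def d_def sum_nonneg power2_commute)
  ultimately show ?thesis
    by simp
qed

end
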